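(* Let $X'$ be a visual hyperbolic metric space with base point $o'$, and $X$ a geodesic hyperbolic metric space with base point $o$. Assume there is a map $f:\partial_\infty X'\to\partial_\infty X$ and a constant $c\ge0$ such that $|(f(\xi'_1)|f(\xi'_2))_o-(\xi'_1|\xi'_2)_{o'}|\le c$ for all $\xi'_1,\xi'_2\in\partial_\infty X'$. Then there exist a map $F:X'\to X$ and a constant $b\ge0$ such that $\big||F(x)F(y)|-|xy|\big|\le b$ for all $x,y\in X'$.
   Context: Gromov product: $(x|y)_z=\frac12(|zx|+|zy|-|xy|)$. A triple $(a_1,a_2,a_3)$ is a $\delta$-triple if $a_\mu\ge\min\{a_{\mu+1},a_{\mu+2}\}-\delta$ for $\mu=1,2,3$ (indices mod 3). $X$ is hyperbolic if for some $\delta\ge0$, $((x|y)_o,(y|z)_o,(x|z)_o)$ is a $\delta$-triple for all $o,x,y,z$. A sequence $(x_i)$ converges to infinity if $(x_i|x_j)_o\to\infty$; two such sequences are equivalent if $(x_i|x'_i)_o\to\infty$; $\partial_\infty X$ is the set of classes, and for $\xi,\xi'\in\partial_\infty X$, $(\xi|\xi')_o=\inf\liminf_i(x_i|x'_i)_o$ over representatives $(x_i)\in\xi$, $(x'_i)\in\xi'$; similarly $(x|\xi)_o$ for $x\in X$. A hyperbolic space $Y$ is visual if for some base point $o\in Y$ there is $D>0$ such that for every $y\in Y$ there is $\xi\in\partial_\infty Y$ with $|oy|\le(y|\xi)_o+D$. *)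

theory Defs
  imports "HOL-Analysis.Analysis" "HOL-Library.Extended_Real"
begin

definition gromov :: "'a::metric_space \<Rightarrow> 'a \<Rightarrow> 'a \<Rightarrow> real" where
  "gromov z x y = (dist z x + dist z y - dist x y) / 2"

definition delta_triple :: "real \<Rightarrow> real \<Rightarrow> real \<Rightarrow> real \<Rightarrow> bool" where
  "delta_triple \<delta> a1 a2 a3 \<longleftrightarrow>
     a1 \<ge> min a2 a3 - \<delta> \<and> a2 \<ge> min a3 a1 - \<delta> \<and> a3 \<ge> min a1 a2 - \<delta>"

definition gromov_hyperbolic :: "'a::metric_space itself \<Rightarrow> bool" where
  "gromov_hyperbolic _ \<longleftrightarrow> (\<exists>\<delta>\<ge>0. \<forall>(p::'a) x y z.
      delta_triple \<delta> (gromov p x y) (gromov p y z) (gromov p x z))"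

definition geodesic_space :: "'a::metric_space itself \<Rightarrow> bool" where
  "geodesic_space _ \<longleftrightarrow> (\<forall>x y::'a. \<exists>\<gamma>::real \<Rightarrow> 'a. \<gamma> 0 = x \<and> \<gamma> (dist x y) = y \<and>
      (\<forall>s\<in>{0..dist x y}. \<forall>t\<in>{0..dist x y}. dist (\<gamma> s) (\<gamma> t) = \<bar>s - t\<bar>))"

definition conv_inf :: "'a::metric_space \<Rightarrow> (nat \<Rightarrow> 'a) \<Rightarrow> bool" where
  "conv_inf p x \<longleftrightarrow> (\<forall>M. \<exists>N. \<forall>i\<ge>N. \<forall>j\<ge>N. gromov p (x i) (x j) \<ge> M)"

definition seq_equiv :: "'a::metric_space \<Rightarrow> (nat \<Rightarrow> 'a) \<Rightarrow> (nat \<Rightarrow> 'a) \<Rightarrow> bool" where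
  "seq_equiv p x y \<longleftrightarrow> filterlim (\<lambda>i. gromov p (x i) (y i)) at_top sequentially"

definition gbdry :: "'a::metric_space \<Rightarrow> (nat \<Rightarrow> 'a) set set" where
  "gbdry p = {{y. conv_inf p y \<and> seq_equiv p x y} | x. conv_inf p x}"

definition gromov_bd :: "'a::metric_space \<Rightarrow> (nat \<Rightarrow> 'a) set \<Rightarrow> (nat \<Rightarrow> 'a) set \<Rightarrow> ereal" where
  "gromov_bd p \<xi> \<eta> = (INF x\<in>\<xi>. INF y\<in>\<eta>. liminf (\<lambda>i. ereal (gromov p (x i) (y i))))"

definition gromov_pt_bd :: "'a::metric_space \<Rightarrow> 'a \<Rightarrow> (nat \<Rightarrow> 'a) set \<Rightarrow> ereal" where
  "gromov_pt_bd p z \<xi> = (INF y\<in>\<xi>. liminf (\<lambda>i. ereal (gromov p z (y i))))"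

definition visual_at :: "'a::metric_space \<Rightarrow> bool" where
  "visual_at p \<longleftrightarrow> gromov_hyperbolic TYPE('a) \<and>
     (\<exists>D>0. \<forall>y. \<exists>\<xi>\<in>gbdry p. ereal (dist p y) \<le> gromov_pt_bd p y \<xi> + ereal D)"

end

theory Submission
  imports Defs
begin

(*
  By visuality every point x of X' points towards some boundary point xi(x) at level |o'x|:
  (x|a_i)_o' >= |o'x| - D eventually, for every sequence (a_i) representing xi(x).
  In the geodesic space X pick F(x) on a geodesic from o towards f(xi(x)) with |o F(x)| = |o'x|;
  it points towards f(xi(x)) at the same level. In a hyperbolic space, for u pointing towards
  zeta at level t and v pointing towards eta at level s, the product (u|v) equals
  min(t, s, (zeta|eta)) up to a bounded error. As f changes (zeta|eta) by at most c, the
  products (F(x)|F(y))_o and (x|y)_o' differ boundedly, and so do the distances, because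
  |xy| = |o'x| + |o'y| - 2 (x|y)_o'.
*)

lemma gromov_commute: "gromov p x y = gromov p y x"
  unfolding gromov_def by (simp add: dist_commute add.commute)

lemma gromov_le_dist_left: "gromov p x y \<le> dist p x"
  unfolding gromov_def using dist_triangle[of p y x] by (simp add: dist_commute)

lemma gromov_le_dist_right: "gromov p x y \<le> dist p y"
  using gromov_le_dist_left[of p y x] by (simp add: gromov_commute)

lemma dist_eq_gromov: "dist x y = dist p x + dist p y - 2 * gromov p x y"
  unfolding gromov_def by (simp add: field_simps)

definition delta_hyperbolic :: "real \<Rightarrow> 'a::metric_space itself \<Rightarrow> bool" where
  "delta_hyperbolic \<delta> _ \<longleftrightarrow>
     (\<forall>(p::'a) x y z. min (gromov p x y) (gromov p y z) - \<delta> \<le> gromov p x z)"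

lemma gromov_hyperbolicE:
  assumes "gromov_hyperbolic TYPE('a::metric_space)"
  obtains \<delta> where "delta_hyperbolic \<delta> TYPE('a)"
  using assms unfolding gromov_hyperbolic_def delta_hyperbolic_def delta_triple_def by blast

lemma delta_hyperbolicD:
  "delta_hyperbolic \<delta> TYPE('a::metric_space) \<Longrightarrow>
     min (gromov p x y) (gromov p y z) - \<delta> \<le> gromov (p::'a) x z"
  unfolding delta_hyperbolic_def by blast

lemma delta_hyperbolic_nonneg:
  assumes "delta_hyperbolic \<delta> TYPE('a::metric_space)"
  shows "0 \<le> \<delta>"
  using delta_hyperbolicD[OF assms, of "undefined::'a" "undefined" "undefined" "undefined"]
  by (simp add: gromov_def)

lemma delta_hyperbolic_four_points:
  assumes "delta_hyperbolic \<delta> TYPE('a::metric_space)"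
  shows "min (gromov p x y) (min (gromov p y z) (gromov p z w)) - 2 * \<delta> \<le> gromov (p::'a) x w"
proof -
  have "min (gromov p x y) (gromov p y w) - \<delta> \<le> gromov p x w"
    and "min (gromov p y z) (gromov p z w) - \<delta> \<le> gromov p y w"
    using delta_hyperbolicD[OF assms] by blast+
  with delta_hyperbolic_nonneg[OF assms] show ?thesis by linarith
qed

lemma gbdry_member_conv_inf:
  assumes "\<zeta> \<in> gbdry p" and "a \<in> \<zeta>"
  shows "conv_inf p a"
  using assms unfolding gbdry_def by blast

lemma gbdry_nonempty:
  assumes "\<zeta> \<in> gbdry p"
  shows "\<zeta> \<noteq> {}"
proof -
  obtain x where x: "conv_inf p x" "\<zeta> = {y. conv_inf p y \<and> seq_equiv p x y}"
    using assms unfolding gbdry_def by blast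
  have "seq_equiv p x x"
    unfolding seq_equiv_def filterlim_at_top eventually_sequentially
  proof
    fix M
    obtain N where "\<forall>i\<ge>N. \<forall>j\<ge>N. M \<le> gromov p (x i) (x j)"
      using x(1) unfolding conv_inf_def by blast
    then show "\<exists>N. \<forall>i\<ge>N. M \<le> gromov p (x i) (x i)" by blast
  qed
  with x show ?thesis by blast
qed

text \<open>Members of a class are equivalent to its representative; that they are equivalent to
  each other needs hyperbolicity.\<close>

lemma gbdry_members_equiv:
  assumes "delta_hyperbolic \<delta> TYPE('a::metric_space)"
    and "\<zeta> \<in> gbdry (p::'a)" and "a \<in> \<zeta>" and "b \<in> \<zeta>"
  shows "\<forall>\<^sub>F i in sequentially. M \<le> gromov p (a i) (b i)"
proof -
  obtain x where x: "\<zeta> = {y. conv_inf p y \<and> seq_equiv p x y}"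
    using assms(2) unfolding gbdry_def by blast
  have "\<forall>\<^sub>F i in sequentially. M + \<delta> \<le> gromov p (x i) (a i) \<and> M + \<delta> \<le> gromov p (x i) (b i)"
    using assms(3,4) x unfolding seq_equiv_def filterlim_at_top by (auto intro: eventually_conj)
  then show ?thesis
  proof (rule eventually_mono)
    fix i
    assume "M + \<delta> \<le> gromov p (x i) (a i) \<and> M + \<delta> \<le> gromov p (x i) (b i)"
    moreover have "min (gromov p (a i) (x i)) (gromov p (x i) (b i)) - \<delta> \<le> gromov p (a i) (b i)"
      using delta_hyperbolicD[OF assms(1)] by blast
    ultimately show "M \<le> gromov p (a i) (b i)" by (simp add: gromov_commute min_def split: if_splits)
  qed
qed

definition points_towards :: "'a::metric_space \<Rightarrow> real \<Rightarrow> 'a \<Rightarrow> (nat \<Rightarrow> 'a) set \<Rightarrow> bool" where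
  "points_towards p K u \<zeta> \<longleftrightarrow>
     (\<forall>a\<in>\<zeta>. \<forall>\<^sub>F i in sequentially. dist p u - K \<le> gromov p u (a i))"

lemma points_towards_of_gromov_pt_bd:
  assumes "ereal (dist p u) \<le> gromov_pt_bd p u \<zeta> + ereal D"
  shows "points_towards p (D + 1) u \<zeta>"
  unfolding points_towards_def
proof
  fix a
  assume "a \<in> \<zeta>"
  then have "gromov_pt_bd p u \<zeta> \<le> liminf (\<lambda>i. ereal (gromov p u (a i)))"
    unfolding gromov_pt_bd_def by (rule INF_lower)
  moreover have "ereal (dist p u - (D + 1)) < gromov_pt_bd p u \<zeta>"
    using assms by (cases "gromov_pt_bd p u \<zeta>") auto
  ultimately have "ereal (dist p u - (D + 1)) < liminf (\<lambda>i. ereal (gromov p u (a i)))"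
    by order
  then have "\<forall>\<^sub>F i in sequentially. dist p u - (D + 1) < gromov p u (a i)"
    using less_LiminfD by fastforce
  then show "\<forall>\<^sub>F i in sequentially. dist p u - (D + 1) \<le> gromov p u (a i)"
    by (rule eventually_mono) simp
qed

lemma visual_at_points_towards:
  assumes "visual_at p"
  obtains D \<xi> where "0 \<le> D" and "\<And>x. \<xi> x \<in> gbdry p" and "\<And>x. points_towards p D x (\<xi> x)"
proof -
  obtain D where "D > 0" and "\<forall>x. \<exists>\<zeta>\<in>gbdry p. ereal (dist p x) \<le> gromov_pt_bd p x \<zeta> + ereal D"
    using assms unfolding visual_at_def by blast
  then have "\<forall>x. \<exists>\<zeta>. \<zeta> \<in> gbdry p \<and> points_towards p (D + 1) x \<zeta>"
    using points_towards_of_gromov_pt_bd by blast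
  then obtain \<xi> where "\<And>x. \<xi> x \<in> gbdry p \<and> points_towards p (D + 1) x (\<xi> x)"
    by metis
  with \<open>D > 0\<close> show ?thesis using that[of "D + 1" \<xi>] by auto
qed

lemma geodesic_point_gromov_eq:
  assumes "geodesic_space TYPE('a::metric_space)" and "0 \<le> t" and "t \<le> dist p z"
  shows "\<exists>u. dist p u = t \<and> gromov p u (z::'a) = t"
proof -
  obtain \<gamma> where \<gamma>: "\<gamma> 0 = p" "\<gamma> (dist p z) = z"
    "\<forall>r\<in>{0..dist p z}. \<forall>s\<in>{0..dist p z}. dist (\<gamma> r) (\<gamma> s) = \<bar>r - s\<bar>"
    using assms(1) unfolding geodesic_space_def by blast
  have "dist (\<gamma> 0) (\<gamma> t) = \<bar>0 - t\<bar>" and "dist (\<gamma> t) (\<gamma> (dist p z)) = \<bar>t - dist p z\<bar>"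
    using \<gamma>(3) assms(2,3) by auto
  then have "dist p (\<gamma> t) = t" and "dist (\<gamma> t) z = dist p z - t"
    using \<gamma>(1,2) assms(2,3) by auto
  then show ?thesis unfolding gromov_def by (intro exI[of _ "\<gamma> t"]) simp
qed

text \<open>The point \<open>u\<close> is taken on a geodesic from \<open>p\<close> to a far point \<open>z N\<close> of a representative
  \<open>z\<close>; hyperbolicity passes \<open>(u|z N) = t\<close> on to \<open>(u|z i)\<close> and then to every equivalent
  sequence, losing \<open>\<delta>\<close> each time.\<close>

lemma geodesic_points_towards:
  assumes "delta_hyperbolic \<delta> TYPE('a::metric_space)" and "geodesic_space TYPE('a)"
    and "\<zeta> \<in> gbdry (p::'a)" and "0 \<le> t"
  shows "\<exists>u. dist p u = t \<and> points_towards p (2 * \<delta>) u \<zeta>"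
proof -
  obtain z where z: "z \<in> \<zeta>" using gbdry_nonempty[OF assms(3)] by blast
  obtain N where N: "\<forall>i\<ge>N. \<forall>j\<ge>N. t \<le> gromov p (z i) (z j)"
    using gbdry_member_conv_inf[OF assms(3) z] unfolding conv_inf_def by blast
  have "t \<le> dist p (z N)"
    using N gromov_le_dist_left[of p "z N" "z N"] by fastforce
  then obtain u where u: "dist p u = t" "gromov p u (z N) = t"
    using geodesic_point_gromov_eq[OF assms(2,4)] by blast
  have "\<forall>\<^sub>F i in sequentially. t - 2 * \<delta> \<le> gromov p u (a i)" if a: "a \<in> \<zeta>" for a
    using eventually_conj[OF gbdry_members_equiv[OF assms(1,3) z a] eventually_ge_at_top[of N]]
  proof (rule eventually_mono)
    fix i
    assume "t \<le> gromov p (z i) (a i) \<and> N \<le> i"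
    with N u(2) have "t \<le> min (gromov p u (z N)) (min (gromov p (z N) (z i)) (gromov p (z i) (a i)))"
      by simp
    with delta_hyperbolic_four_points[OF assms(1)] show "t - 2 * \<delta> \<le> gromov p u (a i)"
      by (smt (verit))
  qed
  with u(1) show ?thesis unfolding points_towards_def by blast
qed

lemma gromov_bd_ge_of_points_towards:
  assumes "delta_hyperbolic \<delta> TYPE('a::metric_space)"
    and "points_towards (p::'a) K u \<zeta>" and "points_towards p K v \<eta>" and "0 \<le> K"
  shows "ereal (gromov p u v - K - 2 * \<delta>) \<le> gromov_bd p \<zeta> \<eta>"
  unfolding gromov_bd_def
proof (intro INF_greatest Liminf_bounded)
  fix a b
  assume "a \<in> \<zeta>" and "b \<in> \<eta>"
  with assms(2,3) have "\<forall>\<^sub>F i in sequentially.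
      dist p u - K \<le> gromov p u (a i) \<and> dist p v - K \<le> gromov p v (b i)"
    unfolding points_towards_def by (simp add: eventually_conj_iff)
  then show "\<forall>\<^sub>F i in sequentially. ereal (gromov p u v - K - 2 * \<delta>) \<le> ereal (gromov p (a i) (b i))"
  proof (rule eventually_mono)
    fix i
    assume "dist p u - K \<le> gromov p u (a i) \<and> dist p v - K \<le> gromov p v (b i)"
    with gromov_le_dist_left[of p u v] gromov_le_dist_right[of p u v] \<open>0 \<le> K\<close>
    have "gromov p u v - K \<le> min (gromov p (a i) u) (min (gromov p u v) (gromov p v (b i)))"
      by (simp add: gromov_commute)
    with delta_hyperbolic_four_points[OF assms(1)]
    show "ereal (gromov p u v - K - 2 * \<delta>) \<le> ereal (gromov p (a i) (b i))"
      by (smt (verit) ereal_less_eq(3))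
  qed
qed

lemma gromov_ge_of_points_towards:
  assumes "delta_hyperbolic \<delta> TYPE('a::metric_space)"
    and "\<zeta> \<in> gbdry (p::'a)" and "\<eta> \<in> gbdry p"
    and "points_towards p K u \<zeta>" and "points_towards p K v \<eta>" and "0 \<le> K"
    and "ereal m \<le> gromov_bd p \<zeta> \<eta>" and "m \<le> dist p u" and "m \<le> dist p v"
  shows "m - K - 1 - 2 * \<delta> \<le> gromov p u v"
proof -
  obtain a b where a: "a \<in> \<zeta>" and b: "b \<in> \<eta>"
    using gbdry_nonempty[OF assms(2)] gbdry_nonempty[OF assms(3)] by blast
  have "ereal (m - 1) < ereal m" by simp
  also have "\<dots> \<le> gromov_bd p \<zeta> \<eta>" by (rule assms(7))
  also have "\<dots> \<le> liminf (\<lambda>i. ereal (gromov p (a i) (b i)))"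
    unfolding gromov_bd_def by (rule INF_lower2[OF a], rule INF_lower[OF b])
  finally have "ereal (m - 1) < liminf (\<lambda>i. ereal (gromov p (a i) (b i)))" .
  then have "\<forall>\<^sub>F i in sequentially. m - 1 < gromov p (a i) (b i)"
    using less_LiminfD by fastforce
  moreover have "\<forall>\<^sub>F i in sequentially. dist p u - K \<le> gromov p u (a i) \<and> dist p v - K \<le> gromov p v (b i)"
    using assms(4,5) a b unfolding points_towards_def by (simp add: eventually_conj_iff)
  ultimately obtain i where "m - 1 < gromov p (a i) (b i)"
    and "dist p u - K \<le> gromov p u (a i)" and "dist p v - K \<le> gromov p v (b i)"
    using eventually_happens'[OF sequentially_bot eventually_conj] by blast
  with assms(6,8,9)
  have "m - K - 1 \<le> min (gromov p u (a i)) (min (gromov p (a i) (b i)) (gromov p (b i) v))"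
    by (simp add: gromov_commute)
  with delta_hyperbolic_four_points[OF assms(1)] show ?thesis by (smt (verit))
qed

lemma gromov_le_of_points_towards:
  assumes "delta_hyperbolic \<delta> TYPE('a::metric_space)" and "delta_hyperbolic \<delta>' TYPE('b::metric_space)"
    and "\<zeta>' \<in> gbdry (p'::'b)" and "\<eta>' \<in> gbdry p'"
    and "points_towards (p::'a) K u \<zeta>" and "points_towards p K v \<eta>"
    and "points_towards p' K' u' \<zeta>'" and "points_towards p' K' v' \<eta>'"
    and "0 \<le> K" and "0 \<le> K'" and "0 \<le> c"
    and "dist p u = dist p' u'" and "dist p v = dist p' v'"
    and "gromov_bd p \<zeta> \<eta> \<le> gromov_bd p' \<zeta>' \<eta>' + ereal c"
  shows "gromov p u v \<le> gromov p' u' v' + (K + K' + 1 + 2 * \<delta> + 2 * \<delta>' + c)"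
proof -
  define m where "m = gromov p u v - K - 2 * \<delta> - c"
  have "ereal (m + c) \<le> gromov_bd p' \<zeta>' \<eta>' + ereal c"
    using gromov_bd_ge_of_points_towards[OF assms(1,5,6,9)] assms(14) unfolding m_def by simp
  then have "ereal m \<le> gromov_bd p' \<zeta>' \<eta>'"
    by (cases "gromov_bd p' \<zeta>' \<eta>'") auto
  moreover have "m \<le> dist p' u'" and "m \<le> dist p' v'"
    using gromov_le_dist_left[of p u v] gromov_le_dist_right[of p u v] assms(9,11,12,13)
      delta_hyperbolic_nonneg[OF assms(1)] unfolding m_def by linarith+
  ultimately have "m - K' - 1 - 2 * \<delta>' \<le> gromov p' u' v'"
    using gromov_ge_of_points_towards[OF assms(2-4,7,8,10)] by blast
  then show ?thesis unfolding m_def by linarith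
qed

lemma abs_gromov_diff_le_of_points_towards:
  assumes "delta_hyperbolic \<delta> TYPE('a::metric_space)" and "delta_hyperbolic \<delta>' TYPE('b::metric_space)"
    and "\<zeta> \<in> gbdry (p::'a)" and "\<eta> \<in> gbdry p" and "\<zeta>' \<in> gbdry (p'::'b)" and "\<eta>' \<in> gbdry p'"
    and "points_towards p K u \<zeta>" and "points_towards p K v \<eta>"
    and "points_towards p' K' u' \<zeta>'" and "points_towards p' K' v' \<eta>'"
    and "0 \<le> K" and "0 \<le> K'" and "0 \<le> c"
    and "dist p u = dist p' u'" and "dist p v = dist p' v'"
    and "gromov_bd p \<zeta> \<eta> \<le> gromov_bd p' \<zeta>' \<eta>' + ereal c"
    and "gromov_bd p' \<zeta>' \<eta>' \<le> gromov_bd p \<zeta> \<eta> + ereal c"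
  shows "\<bar>gromov p u v - gromov p' u' v'\<bar> \<le> K + K' + 1 + 2 * \<delta> + 2 * \<delta>' + c"
  using gromov_le_of_points_towards[OF assms(1,2,5-12,13-16)]
    gromov_le_of_points_towards[OF assms(2,1,3,4,9,10,7,8,12,11,13) assms(14,15)[symmetric] assms(17)]
  by linarith

theorem theorem4p8:
  fixes p' :: "'a::metric_space" and p :: "'b::metric_space"
    and f :: "(nat \<Rightarrow> 'a) set \<Rightarrow> (nat \<Rightarrow> 'b) set" and c :: real
  assumes "visual_at p'"
    and "gromov_hyperbolic TYPE('b)" and "geodesic_space TYPE('b)"
    and "f \<in> gbdry p' \<rightarrow> gbdry p"
    and "c \<ge> 0"
    and "\<forall>\<xi>1\<in>gbdry p'. \<forall>\<xi>2\<in>gbdry p'.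
           gromov_bd p (f \<xi>1) (f \<xi>2) \<le> gromov_bd p' \<xi>1 \<xi>2 + ereal c \<and>
           gromov_bd p' \<xi>1 \<xi>2 \<le> gromov_bd p (f \<xi>1) (f \<xi>2) + ereal c"
  shows "\<exists>F::'a \<Rightarrow> 'b. \<exists>b\<ge>0. \<forall>x y. \<bar>dist (F x) (F y) - dist x y\<bar> \<le> b"
proof -
  obtain \<delta>' where \<delta>': "delta_hyperbolic \<delta>' TYPE('a)"
    using assms(1) gromov_hyperbolicE unfolding visual_at_def by blast
  obtain \<delta> where \<delta>: "delta_hyperbolic \<delta> TYPE('b)"
    using assms(2) gromov_hyperbolicE by blast
  obtain D \<xi> where D: "0 \<le> D" and \<xi>: "\<And>x. \<xi> x \<in> gbdry p'"
    and x_towards: "\<And>x. points_towards p' D x (\<xi> x)"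
    using visual_at_points_towards[OF assms(1)] by blast
  have f\<xi>: "f (\<xi> x) \<in> gbdry p" for x
    using assms(4) \<xi> by blast
  have "\<forall>x. \<exists>u. dist p u = dist p' x \<and> points_towards p (2 * \<delta>) u (f (\<xi> x))"
    using geodesic_points_towards[OF \<delta> assms(3) f\<xi> zero_le_dist] by blast
  then obtain F where F: "\<And>x. dist p (F x) = dist p' x"
    and Fx_towards: "\<And>x. points_towards p (2 * \<delta>) (F x) (f (\<xi> x))"
    by metis
  define C where "C = 2 * \<delta> + D + 1 + 2 * \<delta> + 2 * \<delta>' + c"
  have gromov_close: "\<bar>gromov p (F x) (F y) - gromov p' x y\<bar> \<le> C" for x y
    using abs_gromov_diff_le_of_points_towards[OF \<delta> \<delta>' f\<xi> f\<xi> \<xi> \<xi> Fx_towards Fx_towards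
        x_towards x_towards _ D assms(5) F F] assms(6) \<xi> delta_hyperbolic_nonneg[OF \<delta>]
    unfolding C_def by simp
  have "\<bar>dist (F x) (F y) - dist x y\<bar> \<le> 2 * C" for x y
    using gromov_close[of x y] dist_eq_gromov[of "F x" "F y" p] dist_eq_gromov[of x y p'] F
    by (simp add: abs_le_iff)
  moreover have "0 \<le> 2 * C"
    using D assms(5) delta_hyperbolic_nonneg[OF \<delta>] delta_hyperbolic_nonneg[OF \<delta>'] unfolding C_def by simp
  ultimately show ?thesis by blast
qed

end
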